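(* Let $\mathcal{R}$ be a cell space, let $A,A'\subseteq M$ and let $\mathfrak{g},\mathfrak{g}'\in G/G_0$. Then for every $m\in(\cdot\triangleleft\mathfrak{g})^{-1}(A)\setminus(\cdot\triangleleft\mathfrak{g}')^{-1}(A')$ we have $m\triangleleft\mathfrak{g}\in\bigcup_{g\in\mathfrak{g}}\big(A\setminus(\cdot\triangleleft g^{-1}\cdot\mathfrak{g}')^{-1}(A')\big)$ and $m\triangleleft\mathfrak{g}'\in\bigcup_{g'\in\mathfrak{g}'}\big((\cdot\triangleleft(g')^{-1}\cdot\mathfrak{g})^{-1}(A)\setminus A'\big)$.
   Context: A cell space $\mathcal{R}$ consists of a group $G$ acting transitively on the left on a nonempty set $M$ via $\triangleright$, a point $m_0\in M$ and a family $(g_{m_0,m})_{m\in M}$ in $G$ with $g_{m_0,m}\triangleright m_0=m$. $G_0$ is the stabiliser of $m_0$, $G/G_0$ the set of left cosets (elements are subsets of $G$), with $G$ acting by $g\cdot hG_0=ghG_0$. The right semi-action $\triangleleft\colon M\times G/G_0\to M$ is $m\triangleleft gG_0=g_{m_0,m}g\triangleright m_0$, and $(\cdot\triangleleft\mathfrak{h})^{-1}(B)=\{m\in M: m\triangleleft\mathfrak{h}\in B\}$. *)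

theory Defs
  imports "HOL-Algebra.Group_Action"
begin

definition cell_space ::
  "('a, 'c) monoid_scheme \<Rightarrow> 'b set \<Rightarrow> ('a \<Rightarrow> 'b \<Rightarrow> 'b) \<Rightarrow> 'b \<Rightarrow> ('b \<Rightarrow> 'a) \<Rightarrow> bool" where
  "cell_space G M \<phi> m0 gfam \<longleftrightarrow>
     transitive_action G M \<phi> \<and> M \<noteq> {} \<and> m0 \<in> M \<and>
     (\<forall>m\<in>M. gfam m \<in> carrier G \<and> \<phi> (gfam m) m0 = m)"

definition left_cosets :: "('a, 'c) monoid_scheme \<Rightarrow> 'a set \<Rightarrow> 'a set set" where
  "left_cosets G H = {a <#\<^bsub>G\<^esub> H | a. a \<in> carrier G}"

text \<open>The right semi-action m \<triangleleft> gG0 = gfam m * g acting on m0 (for a coset h,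
  any representative is chosen).\<close>
definition semi_act ::
  "('a, 'c) monoid_scheme \<Rightarrow> ('a \<Rightarrow> 'b \<Rightarrow> 'b) \<Rightarrow> 'b \<Rightarrow> ('b \<Rightarrow> 'a) \<Rightarrow> 'b \<Rightarrow> 'a set \<Rightarrow> 'b" where
  "semi_act G \<phi> m0 gfam m h = \<phi> (gfam m \<otimes>\<^bsub>G\<^esub> (SOME g. g \<in> h)) m0"

definition semi_preimage ::
  "('a, 'c) monoid_scheme \<Rightarrow> 'b set \<Rightarrow> ('a \<Rightarrow> 'b \<Rightarrow> 'b) \<Rightarrow> 'b \<Rightarrow> ('b \<Rightarrow> 'a) \<Rightarrow> 'a set \<Rightarrow> 'b set \<Rightarrow> 'b set" where
  "semi_preimage G M \<phi> m0 gfam h B = {m \<in> M. semi_act G \<phi> m0 gfam m h \<in> B}"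

end

theory Submission
  imports Defs "HOL-Algebra.Left_Coset"
begin

text \<open>Writing \<open>\<g> = s G\<^sub>0\<close>, the point \<open>a = m \<triangleleft> \<g>\<close> is \<open>g\<^sub>m s m\<^sub>0\<close>, so
  \<open>g = g\<^sub>m\<^sup>-\<^sup>1 g\<^sub>a\<close> maps \<open>m\<^sub>0\<close> to \<open>s m\<^sub>0\<close> and therefore lies in \<open>\<g>\<close>. For every coset \<open>\<h>\<close> one
  then has \<open>a \<triangleleft> (g\<^sup>-\<^sup>1 \<h>) = g\<^sub>a g\<^sup>-\<^sup>1 \<h> m\<^sub>0 = g\<^sub>m \<h> m\<^sub>0 = m \<triangleleft> \<h>\<close>. Applied with \<open>\<h> = \<g>'\<close>
  (and symmetrically with the roles of \<open>\<g>\<close> and \<open>\<g>'\<close> exchanged) this transports the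
  membership \<open>m \<triangleleft> \<g> \<in> A\<close> and the non-membership \<open>m \<triangleleft> \<g>' \<notin> A'\<close> to the claimed sets.\<close>

context group_action
begin

lemma l_coset_stabilizer_iff:
  assumes x: "x \<in> E" and s: "s \<in> carrier G" and g: "g \<in> carrier G"
  shows "g \<in> s <# stabilizer G \<phi> x \<longleftrightarrow> \<phi> g x = \<phi> s x"
proof -
  interpret group G
    using group_hom group_hom.axioms(1) by blast
  show ?thesis
  proof
    assume "g \<in> s <# stabilizer G \<phi> x"
    then obtain h where "h \<in> stabilizer G \<phi> x" "g = s \<otimes> h"
      unfolding l_coset_def by blast
    then show "\<phi> g x = \<phi> s x"
      using composition_rule[OF x s] by (simp add: stabilizer_def)
  next
    assume "\<phi> g x = \<phi> s x"
    then have "\<phi> (inv s \<otimes> g) x = \<phi> (inv s) (\<phi> s x)"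
      using composition_rule[OF x _ g] s by simp
    also have "\<dots> = x"
      using orbit_sym_aux[OF s x refl] .
    finally have "inv s \<otimes> g \<in> stabilizer G \<phi> x"
      using s g by (simp add: stabilizer_def)
    then show "g \<in> s <# stabilizer G \<phi> x"
      using subgroup.lcos_module_rev[OF stabilizer_subgroup[OF x]] s g is_group by blast
  qed
qed

lemma semi_act_l_coset:
  assumes m0: "m0 \<in> E" and s: "s \<in> carrier G" and gm: "gfam m \<in> carrier G"
  shows "semi_act G \<phi> m0 gfam m (s <# stabilizer G \<phi> m0) = \<phi> (gfam m \<otimes> s) m0"
proof -
  interpret group G
    using group_hom group_hom.axioms(1) by blast
  let ?r = "SOME g. g \<in> s <# stabilizer G \<phi> m0"
  have "s \<in> s <# stabilizer G \<phi> m0"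
    using lcos_self[OF s stabilizer_subgroup[OF m0]] .
  then have r: "?r \<in> s <# stabilizer G \<phi> m0"
    by (rule someI)
  then have r_carrier: "?r \<in> carrier G"
    using l_coset_carrier[OF _ s stabilizer_subgroup[OF m0]] by blast
  have "\<phi> ?r m0 = \<phi> s m0"
    using l_coset_stabilizer_iff[OF m0 s r_carrier] r by blast
  then show ?thesis
    unfolding semi_act_def using composition_rule[OF m0 gm] r_carrier s by simp
qed

end

lemma cell_space_group_action:
  "cell_space G M \<phi> m0 gfam \<Longrightarrow> group_action G M \<phi>"
  unfolding cell_space_def using transitive_action.axioms(1) by blast

lemma semi_act_mem:
  fixes G (structure)
  assumes cs: "cell_space G M \<phi> m0 gfam" and m: "m \<in> M" and s: "s \<in> carrier G"
  shows "semi_act G \<phi> m0 gfam m (s <# stabilizer G \<phi> m0) \<in> M"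
proof -
  interpret group_action G M \<phi>
    using cell_space_group_action[OF cs] .
  interpret group G
    using group_hom group_hom.axioms(1) by blast
  have m0: "m0 \<in> M" and gm: "gfam m \<in> carrier G"
    using cs m unfolding cell_space_def by auto
  show ?thesis
    unfolding semi_act_l_coset[where gfam = gfam and m = m, OF m0 s gm]
    using element_image[OF _ m0 refl] gm s by simp
qed

lemma semi_act_semi_act_l_coset:
  fixes G (structure)
  assumes cs: "cell_space G M \<phi> m0 gfam" and m: "m \<in> M"
    and s: "s \<in> carrier G" and t: "t \<in> carrier G"
  defines "\<g> \<equiv> s <# stabilizer G \<phi> m0" and "\<h> \<equiv> t <# stabilizer G \<phi> m0"
  shows "\<exists>g\<in>\<g>. semi_act G \<phi> m0 gfam (semi_act G \<phi> m0 gfam m \<g>) (inv g <# \<h>)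
                = semi_act G \<phi> m0 gfam m \<h>"
proof -
  interpret group_action G M \<phi>
    using cell_space_group_action[OF cs] .
  interpret group G
    using group_hom group_hom.axioms(1) by blast
  have m0: "m0 \<in> M" and gfam_spec: "\<And>x. x \<in> M \<Longrightarrow> gfam x \<in> carrier G \<and> \<phi> (gfam x) m0 = x"
    using cs unfolding cell_space_def by auto
  define a where "a = semi_act G \<phi> m0 gfam m \<g>"
  have gm: "gfam m \<in> carrier G"
    using gfam_spec[OF m] by blast
  have a: "a = \<phi> (gfam m \<otimes> s) m0"
    unfolding a_def \<g>_def by (rule semi_act_l_coset[where gfam = gfam and m = m, OF m0 s gm])
  have aM: "a \<in> M"
    unfolding a_def \<g>_def using semi_act_mem[OF cs m s] .
  have ga: "gfam a \<in> carrier G" and ga_m0: "\<phi> (gfam a) m0 = a"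
    using gfam_spec[OF aM] by auto
  define g where "g = inv (gfam m) \<otimes> gfam a"
  have g_carrier: "g \<in> carrier G"
    unfolding g_def using gm ga by simp
  have "\<phi> g m0 = \<phi> (inv (gfam m)) a"
    unfolding g_def using composition_rule[OF m0 _ ga] gm ga_m0 by simp
  also have "\<dots> = \<phi> (inv (gfam m)) (\<phi> (gfam m) (\<phi> s m0))"
    unfolding a using composition_rule[OF m0 gm s] by simp
  also have "\<dots> = \<phi> s m0"
    using orbit_sym_aux[OF gm element_image[OF s m0 refl] refl] .
  finally have g_in: "g \<in> \<g>"
    unfolding \<g>_def using l_coset_stabilizer_iff[OF m0 s g_carrier] by simp
  have "semi_act G \<phi> m0 gfam a (inv g <# \<h>)
        = semi_act G \<phi> m0 gfam a ((inv g \<otimes> t) <# stabilizer G \<phi> m0)"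
    unfolding \<h>_def using lcos_m_assoc[OF stabilizer_subset _ t] g_carrier by simp
  also have "\<dots> = \<phi> (gfam a \<otimes> (inv g \<otimes> t)) m0"
    using semi_act_l_coset[where gfam = gfam and m = a, OF m0 _ ga] g_carrier t by simp
  also have "gfam a \<otimes> (inv g \<otimes> t) = gfam m \<otimes> t"
    unfolding g_def using gm ga t by (simp add: inv_mult_group m_assoc[symmetric])
  also have "\<phi> (gfam m \<otimes> t) m0 = semi_act G \<phi> m0 gfam m \<h>"
    unfolding \<h>_def using semi_act_l_coset[where gfam = gfam and m = m, OF m0 t gm] by simp
  finally show ?thesis
    using g_in unfolding a_def by blast
qed

theorem lemma5:
  fixes G (structure) and M :: "'b set" and \<phi> and m0 :: 'b and gfam
  assumes "cell_space G M \<phi> m0 gfam"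
    and "A \<subseteq> M" and "A' \<subseteq> M"
    and "\<g> \<in> left_cosets G (stabilizer G \<phi> m0)"
    and "\<g>' \<in> left_cosets G (stabilizer G \<phi> m0)"
    and "m \<in> semi_preimage G M \<phi> m0 gfam \<g> A - semi_preimage G M \<phi> m0 gfam \<g>' A'"
  shows "semi_act G \<phi> m0 gfam m \<g> \<in>
           (\<Union>g\<in>\<g>. A - semi_preimage G M \<phi> m0 gfam (inv g <# \<g>') A') \<and>
         semi_act G \<phi> m0 gfam m \<g>' \<in>
           (\<Union>g'\<in>\<g>'. semi_preimage G M \<phi> m0 gfam (inv g' <# \<g>) A - A')"
proof -
  obtain s t where s: "s \<in> carrier G" and \<g>: "\<g> = s <# stabilizer G \<phi> m0"
    and t: "t \<in> carrier G" and \<g>': "\<g>' = t <# stabilizer G \<phi> m0"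
    using assms(4,5) unfolding left_cosets_def by blast
  have m: "m \<in> M" and inA: "semi_act G \<phi> m0 gfam m \<g> \<in> A"
    and notA': "semi_act G \<phi> m0 gfam m \<g>' \<notin> A'"
    using assms(6) unfolding semi_preimage_def by simp_all
  obtain g where "g \<in> \<g>" and "semi_act G \<phi> m0 gfam (semi_act G \<phi> m0 gfam m \<g>) (inv g <# \<g>')
      = semi_act G \<phi> m0 gfam m \<g>'"
    using semi_act_semi_act_l_coset[OF assms(1) m s t] unfolding \<g> \<g>' by blast
  then have "semi_act G \<phi> m0 gfam m \<g> \<in> A - semi_preimage G M \<phi> m0 gfam (inv g <# \<g>') A'"
    using inA notA' by (simp add: semi_preimage_def)
  moreover obtain g' where "g' \<in> \<g>'" and "semi_act G \<phi> m0 gfam (semi_act G \<phi> m0 gfam m \<g>') (inv g' <# \<g>)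
      = semi_act G \<phi> m0 gfam m \<g>"
    using semi_act_semi_act_l_coset[OF assms(1) m t s] unfolding \<g> \<g>' by blast
  moreover from this have "semi_act G \<phi> m0 gfam m \<g>' \<in> semi_preimage G M \<phi> m0 gfam (inv g' <# \<g>) A - A'"
    using semi_act_mem[OF assms(1) m t] inA notA' unfolding \<g>' by (simp add: semi_preimage_def)
  ultimately show ?thesis
    using \<open>g \<in> \<g>\<close> by blast
qed

end
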